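(* Let $p\geq 1$ and let $n_0<n_1<\cdots<n_p$ be positive integers with $n_i=n_0+id$ for a fixed positive integer $d$, such that $\gcd(n_0,\dots,n_p)=1$ and $\{n_0,\dots,n_p\}$ minimally generates the numerical semigroup $S_1=\langle n_0,\dots,n_p\rangle$. Let $s\in\mathrm{Ap}(S_1,n_p)$ and suppose $s=\sum_{i=0}^p\lambda_in_i=\sum_{i=0}^p\lambda_i'n_i$ with all $\lambda_i,\lambda_i'\in\mathbb{N}$. Then \[\sum_{i=0}^p\lambda_i(p-i)d=\sum_{i=0}^p\lambda_i'(p-i)d.\]
   Context: For a numerical semigroup $T$ and $0\neq a\in T$, the Apéry set is $\mathrm{Ap}(T,a)=\{s\in T: s-a\notin T\}$. *)

theory Defs
  imports Main
begin

inductive_set semigroup_gen :: "nat set \<Rightarrow> nat set" for A :: "nat set" where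
  zero: "0 \<in> semigroup_gen A"
| gen: "a \<in> A \<Longrightarrow> a \<in> semigroup_gen A"
| add: "x \<in> semigroup_gen A \<Longrightarrow> y \<in> semigroup_gen A \<Longrightarrow> x + y \<in> semigroup_gen A"

definition minimally_generates :: "nat set \<Rightarrow> bool" where
  "minimally_generates A \<longleftrightarrow> (\<forall>a\<in>A. a \<notin> semigroup_gen (A - {a}))"

text \<open>Apery set Ap(T,a) = {s in T. s - a not in T}, with s - a taken in the integers.\<close>
definition apery :: "nat set \<Rightarrow> nat \<Rightarrow> nat set" where
  "apery T a = {s \<in> T. \<not> (a \<le> s \<and> s - a \<in> T)}"

end

theory Submission
  imports Defs
begin

text \<open>Write an element of \<open>S\<^sub>1\<close> as \<open>\<Sum> \<lambda>\<^sub>i n\<^sub>i = L n\<^sub>0 + d A\<close> with \<open>L = \<Sum> \<lambda>\<^sub>i\<close> and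
  \<open>A = \<Sum> i \<lambda>\<^sub>i \<le> p L\<close>; the claimed quantity is \<open>(p L - A) d\<close>, so it suffices that \<open>(L, A)\<close> is
  determined by \<open>s\<close>. Conversely every \<open>m n\<^sub>0 + d t\<close> with \<open>t \<le> p m\<close> lies in \<open>S\<^sub>1\<close>, so for \<open>s\<close> in
  the Apery set \<open>A \<ge> p\<close> is impossible (else \<open>s - n\<^sub>p = (L - 1) n\<^sub>0 + d (A - p) \<in> S\<^sub>1\<close>).
  Two representations with \<open>L' < L\<close> and \<open>A, A' < p\<close> would give \<open>(L - L') n\<^sub>0 = d t\<close> with
  \<open>0 < t < p\<close>, making \<open>n\<^sub>t\<close> a proper multiple of \<open>n\<^sub>0\<close>, against minimality.\<close>

lemma semigroup_gen_mult_mem: "a \<in> A \<Longrightarrow> j * a \<in> semigroup_gen A"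
  by (induction j) (auto intro: semigroup_gen.intros)

lemma minimally_generates_dvd_imp_eq:
  assumes "minimally_generates A" and "a \<in> A" and "b \<in> A" and "a dvd b"
  shows "a = b"
proof (rule ccontr)
  assume "a \<noteq> b"
  obtain j where "b = j * a" using \<open>a dvd b\<close> by (metis dvdE mult.commute)
  moreover have "a \<in> A - {b}" using \<open>a \<in> A\<close> \<open>a \<noteq> b\<close> by blast
  ultimately have "b \<in> semigroup_gen (A - {b})" by (simp add: semigroup_gen_mult_mem)
  then show False using assms(1,3) unfolding minimally_generates_def by blast
qed

lemma arith_seq_semigroup_gen_mem:
  fixes n :: "nat \<Rightarrow> nat"
  assumes hn: "\<forall>i\<le>p. n i = n0 + i * d" and "t \<le> p * m"
  shows "m * n0 + d * t \<in> semigroup_gen (n ` {0..p})"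
  using \<open>t \<le> p * m\<close>
proof (induction m arbitrary: t)
  case 0
  then show ?case by (simp add: semigroup_gen.zero)
next
  case (Suc m)
  define j where "j = min t p"
  have "t - j \<le> p * m" using Suc.prems unfolding j_def by auto
  then have "m * n0 + d * (t - j) \<in> semigroup_gen (n ` {0..p})" by (rule Suc.IH)
  moreover have "n j \<in> semigroup_gen (n ` {0..p})"
    by (rule semigroup_gen.gen) (auto simp: j_def)
  moreover have "m * n0 + d * (t - j) + n j = Suc m * n0 + d * t"
  proof -
    have "j \<le> t" and "j \<le> p" by (simp_all add: j_def)
    then have "d * (t - j) + d * j = d * t" and "n j = n0 + d * j"
      using hn by (simp_all add: add_mult_distrib2[symmetric] mult.commute)
    then show ?thesis by simp
  qed
  ultimately show ?case by (metis semigroup_gen.add)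
qed

lemma apery_arith_seq_weight_less:
  fixes n :: "nat \<Rightarrow> nat"
  assumes "p \<ge> 1" and hn: "\<forall>i\<le>p. n i = n0 + i * d"
    and "s \<in> apery (semigroup_gen (n ` {0..p})) (n p)"
    and s: "s = L * n0 + d * A" and "A \<le> p * L"
  shows "A < p"
proof (rule ccontr)
  assume "\<not> A < p"
  then obtain m where L: "L = Suc m" using \<open>A \<le> p * L\<close> \<open>p \<ge> 1\<close> by (cases L) auto
  have "A - p \<le> p * m" using \<open>A \<le> p * L\<close> L by (simp add: algebra_simps)
  then have "m * n0 + d * (A - p) \<in> semigroup_gen (n ` {0..p})"
    by (rule arith_seq_semigroup_gen_mem[OF hn])
  moreover have "n p \<le> s" and "s - n p = m * n0 + d * (A - p)"
  proof -
    have "d * (A - p) + d * p = d * A"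
      using \<open>\<not> A < p\<close> by (simp add: add_mult_distrib2[symmetric])
    then show "n p \<le> s" and "s - n p = m * n0 + d * (A - p)"
      using hn s L by (simp_all add: algebra_simps)
  qed
  ultimately show False using assms(3) unfolding apery_def by auto
qed

lemma arith_seq_factorization_length_unique:
  fixes n :: "nat \<Rightarrow> nat"
  assumes hn: "\<forall>i\<le>p. n i = n0 + i * d" and "n0 > 0" and "d > 0"
    and hmin: "minimally_generates (n ` {0..p})"
    and "L * n0 + d * A = L' * n0 + d * A'" and "A < p" and "A' < p"
  shows "L = L'"
proof -
  have False if "L' < L" "L * n0 + d * A = L' * n0 + d * A'" "A' < p"
    for L L' A A' :: nat
  proof -
    have "A < A'"
    proof (rule ccontr)
      assume "\<not> A < A'"
      then have "L' * n0 + d * A' < L * n0 + d * A"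
        using that(1) \<open>n0 > 0\<close> by (simp add: add_less_le_mono)
      then show False using that(2) by simp
    qed
    define t where "t = A' - A"
    have "(L - L') * n0 = d * t"
      using that(1,2) \<open>A < A'\<close> by (simp add: t_def algebra_simps diff_mult_distrib diff_mult_distrib2)
    then have "n t = Suc (L - L') * n0" using hn that(3) by (simp add: t_def algebra_simps)
    then have "n0 dvd n t" by simp
    moreover have "n0 \<in> n ` {0..p}" using hn by (auto intro!: image_eqI[where x=0])
    moreover have "n t \<in> n ` {0..p}" using that(3) by (simp add: t_def)
    ultimately have "n0 = n t" using hmin minimally_generates_dvd_imp_eq by blast
    moreover have "n t = n0 + t * d" and "t > 0"
      using hn that(3) \<open>A < A'\<close> by (simp_all add: t_def)
    ultimately show False using \<open>d > 0\<close> by simp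
  qed
  then show ?thesis using assms(5-7) by (metis linorder_neqE_nat)
qed

lemma sum_arith_seq:
  fixes n f :: "nat \<Rightarrow> nat"
  assumes "\<forall>i\<le>p. n i = n0 + i * d"
  shows "(\<Sum>i=0..p. f i * n i) = sum f {0..p} * n0 + d * (\<Sum>i=0..p. f i * i)"
proof -
  have "(\<Sum>i=0..p. f i * n i) = (\<Sum>i=0..p. f i * n0 + d * (f i * i))"
    using assms by (intro sum.cong) (auto simp: algebra_simps)
  then show ?thesis by (simp add: sum.distrib sum_distrib_left sum_distrib_right)
qed

lemma sum_weighted_index_le:
  fixes f :: "nat \<Rightarrow> nat"
  shows "(\<Sum>i=0..p. f i * i) \<le> p * sum f {0..p}"
  unfolding sum_distrib_left by (intro sum_mono) auto

lemma sum_weighted_complement_index: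
  fixes f :: "nat \<Rightarrow> nat"
  shows "(\<Sum>i=0..p. f i * (p - i)) = p * sum f {0..p} - (\<Sum>i=0..p. f i * i)"
proof -
  have "(\<Sum>i=0..p. f i * (p - i)) + (\<Sum>i=0..p. f i * i) = p * sum f {0..p}"
    unfolding sum.distrib[symmetric] sum_distrib_left
    by (intro sum.cong) (auto simp: algebra_simps diff_mult_distrib2)
  then show ?thesis by simp
qed

theorem lemma4p4:
  fixes p d n0 s :: nat and n lam lam' :: "nat \<Rightarrow> nat"
  assumes hp: "p \<ge> 1"
    and hn0: "n0 > 0"
    and hd: "d > 0"
    and hn: "\<forall>i\<le>p. n i = n0 + i * d"
    and hgcd: "Gcd (n ` {0..p}) = 1"
    and hmin: "minimally_generates (n ` {0..p})"
    and hs: "s \<in> apery (semigroup_gen (n ` {0..p})) (n p)"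
    and h1: "s = (\<Sum>i=0..p. lam i * n i)"
    and h2: "s = (\<Sum>i=0..p. lam' i * n i)"
  shows "(\<Sum>i=0..p. lam i * (p - i) * d) = (\<Sum>i=0..p. lam' i * (p - i) * d)"
proof -
  define L L' A A' where "L = sum lam {0..p}" and "L' = sum lam' {0..p}"
    and "A = (\<Sum>i=0..p. lam i * i)" and "A' = (\<Sum>i=0..p. lam' i * i)"
  have s: "s = L * n0 + d * A" and s': "s = L' * n0 + d * A'"
    using h1 h2 sum_arith_seq[OF hn] by (simp_all add: L_def L'_def A_def A'_def)
  have "A \<le> p * L" and "A' \<le> p * L'"
    by (simp_all add: L_def L'_def A_def A'_def sum_weighted_index_le)
  then have "A < p" and "A' < p"
    using apery_arith_seq_weight_less[OF hp hn hs] s s' by blast+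
  moreover have "L * n0 + d * A = L' * n0 + d * A'" using s s' by simp
  ultimately have "L = L'" using arith_seq_factorization_length_unique[OF hn hn0 hd hmin] by blast
  moreover from this have "A = A'" using s s' hd by simp
  ultimately have "(\<Sum>i=0..p. lam i * (p - i)) = (\<Sum>i=0..p. lam' i * (p - i))"
    by (simp add: sum_weighted_complement_index L_def L'_def A_def A'_def)
  then show ?thesis by (simp flip: sum_distrib_right)
qed

end
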